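(* Let $p$ be a prime and let $\lambda\vdash n$, $\mu\vdash m$ ($n,m\ge0$) be $p$-deprived partitions having no part in common. Then $g_{\lambda\mu}=g_\lambda g_\mu$ in $\Lambda_{\mathbb{Q}}$. Consequently, for every $p$-deprived partition $\lambda$, $g_\lambda=\prod_{u\ge1,\,p\nmid u}g_{(u)^{r_u(\lambda)}}$.
   Context: $\Lambda_{\mathbb{Q}}$ is the ring of symmetric functions in $x_1,x_2,\dots$ over $\mathbb{Q}$; $p_s=\sum_ix_i^s$. For a partition $\lambda$ (written $\lambda\vdash n$ if its parts sum to $n$), $r_a(\lambda)$ is the number of parts equal to $a$, $p_\lambda=\prod p_{\lambda_i}$ over nonzero parts, $z_\lambda=\prod_{a\ge1}a^{r_a(\lambda)}r_a(\lambda)!$, and $(-1)^\lambda=(-1)^{\sum_i(\lambda_i-1)}$. The product $\lambda\mu$ of partitions is the partition whose multiset of parts is the union of those of $\lambda$ and $\mu$; $(u)^r$ is the partition with $r$ parts equal to $u$. A partition $\mu$ is a $p$-splitting of $\lambda$ if $\mu$ is obtained from $\lambda$ by replacing one part $pu$ ($u\ge1$) by $p$ parts equal to $u$; $p$-equivalence $\sim_p$ is the equivalence relation on partitions of $n$ generated by $p$-splitting. A partition is $p$-deprived if none of its parts is divisible by $p$. Define $g_\lambda:=\sum_{\mu\sim_p\lambda}(-1)^\mu\frac{p_\mu}{z_\mu}$. *)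

theory Defs
  imports Complex_Main "HOL-Library.Multiset" "HOL-Computational_Algebra.Primes"
begin

text \<open>A monomial x_{i_1} ... x_{i_k} is represented by the multiset of variable
  indices {#i_1,...,i_k#}.  The ring of
  symmetric functions Lambda_Q is a subring of this ring, so identities in
  Lambda_Q are identities of such series.\<close>

type_synonym series = "nat multiset \<Rightarrow> rat"

definition sf_one :: series where
  "sf_one m = (if m = {#} then 1 else 0)"

definition sf_mult :: "series \<Rightarrow> series \<Rightarrow> series" where
  "sf_mult f g m = (\<Sum>(a, b) \<in> {(a, b). a + b = m}. f a * g b)"

text \<open>Power sum p_s = sum_i x_i^s (for s >= 1).\<close>
definition psum :: "nat \<Rightarrow> series" where
  "psum s m = (if \<exists>i. m = replicate_mset s i then 1 else 0)"

definition sf_prod :: "(nat \<Rightarrow> series) \<Rightarrow> nat set \<Rightarrow> series" where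
  "sf_prod f A = foldr (\<lambda>u acc. sf_mult (f u) acc) (sorted_list_of_set A) sf_one"

text \<open>A partition is a finite multiset of positive integers (its parts);
  lambda |- n means sum_mset lambda = n.  The product lambda mu of partitions is
  multiset sum lambda + mu, (u)^r is replicate_mset r u, r_a(lambda) = count lambda a.\<close>

definition is_partition :: "nat multiset \<Rightarrow> bool" where
  "is_partition lam \<longleftrightarrow> (\<forall>a \<in># lam. 0 < a)"

definition p_lam :: "nat multiset \<Rightarrow> series" where
  "p_lam lam = foldr (\<lambda>s acc. sf_mult (psum s) acc) (sorted_list_of_multiset lam) sf_one"

definition z_lam :: "nat multiset \<Rightarrow> nat" where
  "z_lam lam = (\<Prod>a \<in> set_mset lam. a ^ count lam a * fact (count lam a))"

definition sign_lam :: "nat multiset \<Rightarrow> rat" where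
  "sign_lam lam = (-1) ^ (\<Sum>a \<in># lam. (a - 1))"

definition p_split :: "nat \<Rightarrow> nat multiset \<Rightarrow> nat multiset \<Rightarrow> bool" where
  "p_split p lam mu \<longleftrightarrow>
     (\<exists>u. 1 \<le> u \<and> p * u \<in># lam \<and> mu = lam - {#p * u#} + replicate_mset p u)"

definition p_equiv :: "nat \<Rightarrow> nat multiset \<Rightarrow> nat multiset \<Rightarrow> bool" where
  "p_equiv p = (\<lambda>lam mu. lam = mu \<or> p_split p lam mu \<or> p_split p mu lam)\<^sup>*\<^sup>*"

definition p_deprived :: "nat \<Rightarrow> nat multiset \<Rightarrow> bool" where
  "p_deprived p lam \<longleftrightarrow> (\<forall>a \<in># lam. \<not> p dvd a)"

definition g_lam :: "nat \<Rightarrow> nat multiset \<Rightarrow> series" where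
  "g_lam p lam = (\<lambda>m. \<Sum>mu \<in> {mu. is_partition mu \<and> sum_mset mu = sum_mset lam \<and> p_equiv p mu lam}.
      sign_lam mu / of_nat (z_lam mu) * p_lam mu m)"

end

theory Submission
  imports Defs
begin

text \<open>Every partition \<open>\<nu>\<close> is \<open>p\<close>-equivalent to the \<open>p\<close>-deprived partition \<open>p_core p \<nu>\<close>
  obtained by splitting each part \<open>p\<^sup>k r\<close> with \<open>r\<close> prime to \<open>p\<close> into \<open>p\<^sup>k\<close> parts \<open>r\<close>, and
  \<open>p\<close>-splitting does not change \<open>p_core\<close>; so for \<open>p\<close>-deprived \<open>\<lambda>\<close> the terms of \<open>g\<^sub>\<lambda>\<close> are
  indexed by the fibre of \<open>p_core p\<close> over \<open>\<lambda>\<close>. If \<open>\<lambda>\<close> and \<open>\<mu>\<close> have no part in common,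
  the fibre over \<open>\<lambda>\<mu>\<close> is the product of the fibres over \<open>\<lambda>\<close> and \<open>\<mu>\<close> (sort the parts by
  whether their \<open>p\<close>-free part lies in \<open>\<lambda>\<close> or in \<open>\<mu>\<close>), and on partitions with disjoint
  supports both \<open>p\<^sub>\<nu>\<close> and \<open>(-1)\<^sup>\<nu>/z\<^sub>\<nu>\<close> are multiplicative. Splitting off one part
  size at a time gives the product formula.\<close>

lemma finite_multisets_bounded_size:
  assumes "finite A"
  shows "finite {M. set_mset M \<subseteq> A \<and> size M \<le> k}"
proof -
  have "{M. set_mset M \<subseteq> A \<and> size M \<le> k} = (\<Union>n\<le>k. multisets_of_size A n)"
    by (auto simp: multisets_of_size_def)
  then show ?thesis using assms by auto
qed

lemma finite_submultisets: "finite {a. a \<subseteq># m}"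
proof -
  have "{a. a \<subseteq># m} \<subseteq> {M. set_mset M \<subseteq> set_mset m \<and> size M \<le> size m}"
    by (auto simp: size_mset_mono mset_subset_eqD)
  then show ?thesis using finite_multisets_bounded_size finite_subset by blast
qed

lemma add_pairs_eq_image: "{(a, b). a + b = m} = (\<lambda>a. (a, m - a)) ` {a. a \<subseteq># m}"
  by (auto simp: image_iff mset_subset_eq_exists_conv)

lemma finite_add_pairs: "finite {(a, b). a + b = (m :: 'a multiset)}"
  unfolding add_pairs_eq_image by (simp add: finite_submultisets)

lemma sf_mult_commute: "sf_mult f g = sf_mult g f"
  unfolding sf_mult_def
  by (intro ext sum.reindex_bij_witness[of _ prod.swap prod.swap]) (auto simp: add.commute)

lemma sf_mult_one_left: "sf_mult sf_one f = f"
proof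
  fix m
  have "sf_mult sf_one f m = (\<Sum>a\<in>{a. a \<subseteq># m}. if a = {#} then f (m - a) else 0)"
    unfolding sf_mult_def add_pairs_eq_image sf_one_def
    by (subst sum.reindex) (auto simp: inj_on_def intro: sum.cong)
  also have "\<dots> = f m" by (simp add: finite_submultisets)
  finally show "sf_mult sf_one f m = f m" .
qed

lemma sf_mult_assoc: "sf_mult (sf_mult f g) h = sf_mult f (sf_mult g h)"
proof
  fix m :: "nat multiset"
  have fin: "finite {p. fst p + snd p = x}" for x :: "nat multiset"
    using finite_add_pairs[of x] by (simp add: split_def)
  have "sf_mult (sf_mult f g) h m
      = (\<Sum>(x, c)\<in>{(x, c). x + c = m}. \<Sum>(a, b)\<in>{(a, b). a + b = x}. f a * g b * h c)"
    unfolding sf_mult_def by (auto simp: sum_distrib_right split_def intro!: sum.cong)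
  also have "\<dots> = (\<Sum>((x, c), (a, b))\<in>(SIGMA (x, c):{(x, c). x + c = m}. {(a, b). a + b = x}). f a * g b * h c)"
    by (subst sum.Sigma[symmetric]) (auto simp: finite_add_pairs fin split_def)
  also have "\<dots> = (\<Sum>((a, y), (b, c))\<in>(SIGMA (a, y):{(a, y). a + y = m}. {(b, c). b + c = y}). f a * g b * h c)"
    by (rule sum.reindex_bij_witness[of _ "\<lambda>((a, y), (b, c)). ((a + b, c), (a, b))"
          "\<lambda>((x, c), (a, b)). ((a, b + c), (b, c))"])
      (auto simp: add.assoc)
  also have "\<dots> = (\<Sum>(a, y)\<in>{(a, y). a + y = m}. \<Sum>(b, c)\<in>{(b, c). b + c = y}. f a * g b * h c)"
    by (subst sum.Sigma[symmetric]) (auto simp: finite_add_pairs fin split_def)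
  also have "\<dots> = sf_mult f (sf_mult g h) m"
    unfolding sf_mult_def by (auto simp: sum_distrib_left mult.assoc split_def intro!: sum.cong)
  finally show "sf_mult (sf_mult f g) h m = sf_mult f (sf_mult g h) m" .
qed

lemma sf_mult_sum_sum:
  "sf_mult (\<lambda>m. \<Sum>i\<in>I. F i m) (\<lambda>m. \<Sum>j\<in>J. G j m)
     = (\<lambda>m. \<Sum>i\<in>I. \<Sum>j\<in>J. sf_mult (F i) (G j) m)"
proof
  fix m :: "nat multiset"
  show "sf_mult (\<lambda>m. \<Sum>i\<in>I. F i m) (\<lambda>m. \<Sum>j\<in>J. G j m) m
     = (\<Sum>i\<in>I. \<Sum>j\<in>J. sf_mult (F i) (G j) m)"
    unfolding sf_mult_def sum_product split_def
    by (simp add: sum.swap[of _ "{p. fst p + snd p = m}"])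
qed

lemma sf_mult_scale:
  "sf_mult (\<lambda>m. c * f m) (\<lambda>m. d * g m) = (\<lambda>m. c * d * sf_mult f g m)"
  unfolding sf_mult_def by (simp add: sum_distrib_left split_def mult_ac)

lemma p_lam_empty: "p_lam {#} = sf_one"
  by (simp add: p_lam_def)

lemma p_lam_add_mset: "p_lam (add_mset s lam) = sf_mult (psum s) (p_lam lam)"
proof -
  define f where "f t = sf_mult (psum t)" for t
  have commute: "f x \<circ> f y = f y \<circ> f x" for x y
    by (rule ext) (metis f_def comp_apply sf_mult_assoc sf_mult_commute)
  have "foldr f (sorted_list_of_multiset (add_mset s lam)) = fold f (sorted_list_of_multiset (add_mset s lam))"
    by (rule foldr_fold) (rule commute)
  also have "\<dots> = fold f (s # sorted_list_of_multiset lam)"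
    by (rule fold_multiset_equiv) (auto simp: commute)
  also have "\<dots> = foldr f (s # sorted_list_of_multiset lam)"
    by (rule foldr_fold[symmetric]) (rule commute)
  finally show ?thesis
    unfolding p_lam_def f_def by (metis foldr_Cons comp_apply)
qed

lemma p_lam_add: "p_lam (a + b) = sf_mult (p_lam a) (p_lam b)"
  by (induction a) (simp_all add: p_lam_empty sf_mult_one_left p_lam_add_mset sf_mult_assoc)

definition p_power_part :: "nat \<Rightarrow> nat \<Rightarrow> nat" where
  "p_power_part p a = p ^ multiplicity p a"

definition p_free_part :: "nat \<Rightarrow> nat \<Rightarrow> nat" where
  "p_free_part p a = a div p_power_part p a"

definition p_core :: "nat \<Rightarrow> nat multiset \<Rightarrow> nat multiset" where
  "p_core p nu = (\<Sum>a\<in>#nu. replicate_mset (p_power_part p a) (p_free_part p a))"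

lemma p_core_empty [simp]: "p_core p {#} = {#}"
  by (simp add: p_core_def)

lemma p_core_add_mset [simp]:
  "p_core p (add_mset a nu) = replicate_mset (p_power_part p a) (p_free_part p a) + p_core p nu"
  by (simp add: p_core_def)

lemma p_core_add [simp]: "p_core p (nu + nu') = p_core p nu + p_core p nu'"
  by (simp add: p_core_def)

lemma p_core_replicate_mset:
  "p_core p (replicate_mset n u) = replicate_mset (n * p_power_part p u) (p_free_part p u)"
  by (induction n) (auto simp: multiset_eq_iff)

lemma p_core_p_deprived: "p_deprived p nu \<Longrightarrow> p_core p nu = nu"
  unfolding p_deprived_def
  by (induction nu) (auto simp: p_power_part_def p_free_part_def not_dvd_imp_multiplicity_0)

lemma sum_mset_p_core: "sum_mset (p_core p nu) = sum_mset nu"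
proof -
  have "p_power_part p a * p_free_part p a = a" for a
    unfolding p_power_part_def p_free_part_def using multiplicity_dvd[of p a] by simp
  then show ?thesis by (induction nu) auto
qed

lemma in_p_core_iff: "p > 0 \<Longrightarrow> x \<in># p_core p nu \<longleftrightarrow> (\<exists>a\<in>#nu. x = p_free_part p a)"
  by (induction nu) (auto simp: p_power_part_def)

lemma p_core_filter_mset:
  "p_core p (filter_mset (\<lambda>a. Q (p_free_part p a)) nu) = filter_mset Q (p_core p nu)"
  by (induction nu) (auto simp: multiset_eq_iff)

lemma p_core_split_part:
  assumes "prime p" "u > 0"
  shows "replicate_mset (p_power_part p (p * u)) (p_free_part p (p * u)) = p_core p (replicate_mset p u)"
proof -
  have "multiplicity p (p * u) = Suc (multiplicity p u)"
    using assms by (intro multiplicity_times_same) (auto simp: not_prime_unit)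
  then have pow: "p_power_part p (p * u) = p * p_power_part p u"
    by (simp add: p_power_part_def)
  then have "p_free_part p (p * u) = p_free_part p u"
    using assms(1) by (simp add: p_free_part_def prime_gt_0_nat)
  with pow show ?thesis by (simp add: p_core_replicate_mset)
qed

lemma p_core_p_split:
  assumes "prime p" "p_split p lam mu"
  shows "p_core p lam = p_core p mu"
proof -
  obtain u where u: "u \<ge> 1" "p * u \<in># lam" "mu = lam - {#p * u#} + replicate_mset p u"
    using assms(2) unfolding p_split_def by blast
  obtain nu where "lam = add_mset (p * u) nu"
    using u(2) by (meson multi_member_split)
  with u show ?thesis using p_core_split_part[OF assms(1)] by simp
qed

lemma p_core_p_equiv:
  assumes "prime p" "p_equiv p lam mu"
  shows "p_core p lam = p_core p mu"
  using assms(2) unfolding p_equiv_def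
  by (induction rule: rtranclp_induct) (auto dest: p_core_p_split[OF assms(1)])

lemma size_le_sum_mset: "is_partition nu \<Longrightarrow> size nu \<le> sum_mset nu"
  unfolding is_partition_def by (induction nu) auto

lemma p_equiv_p_core:
  assumes "prime p" "is_partition nu"
  shows "p_equiv p nu (p_core p nu)"
  using assms(2)
proof (induction "sum_mset nu - size nu" arbitrary: nu rule: less_induct)
  case less
  show ?case
  proof (cases "p_deprived p nu")
    case True
    then show ?thesis by (simp add: p_core_p_deprived p_equiv_def)
  next
    case False
    then obtain u where u: "p * u \<in># nu"
      unfolding p_deprived_def by blast
    with less.prems have "u \<ge> 1"
      unfolding is_partition_def by (cases u) auto
    obtain nu0 where nu0: "nu = add_mset (p * u) nu0"
      using u by (meson multi_member_split)
    define nu' where "nu' = nu0 + replicate_mset p u"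
    have split: "p_split p nu nu'"
      unfolding p_split_def nu'_def using \<open>u \<ge> 1\<close> u nu0 by auto
    have part: "is_partition nu'"
      using less.prems \<open>u \<ge> 1\<close> unfolding is_partition_def nu'_def nu0 by auto
    \<comment> \<open>splitting preserves the sum and adds \<open>p - 1 > 0\<close> parts\<close>
    have "sum_mset nu' - size nu' < sum_mset nu - size nu"
      using size_le_sum_mset[OF part] prime_ge_2_nat[OF assms(1)]
      by (simp add: nu'_def nu0)
    then have "p_equiv p nu' (p_core p nu')"
      using less.hyps part by blast
    with split show ?thesis
      unfolding p_equiv_def p_core_p_split[OF assms(1) split]
      by (auto intro: converse_rtranclp_into_rtranclp)
  qed
qed

definition p_core_fibre :: "nat \<Rightarrow> nat multiset \<Rightarrow> nat multiset set" where
  "p_core_fibre p lam = {mu. is_partition mu \<and> p_core p mu = lam}"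

lemma p_equiv_class_eq_p_core_fibre:
  assumes "prime p" "p_deprived p lam"
  shows "{mu. is_partition mu \<and> sum_mset mu = sum_mset lam \<and> p_equiv p mu lam} = p_core_fibre p lam"
  unfolding p_core_fibre_def
  using p_core_p_equiv[OF assms(1)] p_core_p_deprived[OF assms(2)] p_equiv_p_core[OF assms(1)]
    sum_mset_p_core
  by metis

definition class_weight :: "nat multiset \<Rightarrow> rat" where
  "class_weight nu = sign_lam nu / of_nat (z_lam nu)"

lemma g_lam_eq_sum_p_core_fibre:
  assumes "prime p" "p_deprived p lam"
  shows "g_lam p lam = (\<lambda>m. \<Sum>mu\<in>p_core_fibre p lam. class_weight mu * p_lam mu m)"
  unfolding g_lam_def class_weight_def p_equiv_class_eq_p_core_fibre[OF assms] ..

lemma z_lam_add: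
  assumes "set_mset a \<inter> set_mset b = {}"
  shows "z_lam (a + b) = z_lam a * z_lam b"
proof -
  define t :: "nat multiset \<Rightarrow> nat \<Rightarrow> nat" where "t c x = x ^ count c x * fact (count c x)" for c x
  have "count b x = 0" if "x \<in># a" for x
    using assms that by (auto simp: count_eq_zero_iff)
  moreover have "count a x = 0" if "x \<in># b" for x
    using assms that by (auto simp: count_eq_zero_iff)
  ultimately have "(\<Prod>x \<in> set_mset a. t (a + b) x) = z_lam a" "(\<Prod>x \<in> set_mset b. t (a + b) x) = z_lam b"
    unfolding z_lam_def t_def by (auto intro: prod.cong)
  moreover have "z_lam (a + b) = (\<Prod>x \<in> set_mset a. t (a + b) x) * (\<Prod>x \<in> set_mset b. t (a + b) x)"
    unfolding z_lam_def t_def using assms by (simp add: prod.union_disjoint)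
  ultimately show ?thesis by simp
qed

lemma class_weight_add:
  "set_mset a \<inter> set_mset b = {} \<Longrightarrow> class_weight (a + b) = class_weight a * class_weight b"
  by (simp add: class_weight_def sign_lam_def power_add z_lam_add)

lemma p_free_part_in_p_core_fibre:
  assumes "prime p" "mu \<in> p_core_fibre p lam" "x \<in># mu"
  shows "p_free_part p x \<in># lam"
proof -
  have "p_free_part p x \<in># p_core p mu"
    using assms(1,3) in_p_core_iff[of p "p_free_part p x" mu] prime_gt_0_nat by blast
  with assms(2) show ?thesis by (simp add: p_core_fibre_def)
qed

lemma filter_mset_all: "\<forall>x\<in>#M. P x \<Longrightarrow> filter_mset P M = M"
  by (simp add: filter_mset_eq_conv)

lemma sum_p_core_fibre_add:
  assumes "prime p" "set_mset lam \<inter> set_mset mu = {}"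
  shows "(\<Sum>(a, b)\<in>p_core_fibre p lam \<times> p_core_fibre p mu. G (a + b))
       = (\<Sum>nu\<in>p_core_fibre p (lam + mu). G nu)"
proof -
  define P where "P = (\<lambda>x. p_free_part p x \<in># lam)"
  define split where "split nu = (filter_mset P nu, filter_mset (\<lambda>x. \<not> P x) nu)" for nu
  show ?thesis
  proof (rule sum.reindex_bij_witness[of _ split "\<lambda>(a, b). a + b"])
    fix ab assume "ab \<in> p_core_fibre p lam \<times> p_core_fibre p mu"
    then obtain a b where ab: "ab = (a, b)" "a \<in> p_core_fibre p lam" "b \<in> p_core_fibre p mu"
      by blast
    then have "\<forall>x\<in>#a. P x" "\<forall>x\<in>#b. \<not> P x"
      using p_free_part_in_p_core_fibre[OF assms(1)] assms(2) unfolding P_def by blast+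
    then show "split (case ab of (a, b) \<Rightarrow> a + b) = ab"
      by (simp add: ab(1) split_def filter_mset_all)
    show "(case ab of (a, b) \<Rightarrow> a + b) \<in> p_core_fibre p (lam + mu)"
      using ab unfolding p_core_fibre_def is_partition_def by auto
  next
    fix nu assume nu: "nu \<in> p_core_fibre p (lam + mu)"
    show "(case split nu of (a, b) \<Rightarrow> a + b) = nu"
      by (simp add: split_def flip: multiset_partition)
    have "\<forall>x\<in>#lam. x \<in># lam" "\<forall>x\<in>#mu. x \<notin># lam"
      using assms(2) by auto
    then have "p_core p (filter_mset P nu) = lam" "p_core p (filter_mset (\<lambda>x. \<not> P x) nu) = mu"
      using nu p_core_filter_mset[of p "\<lambda>x. x \<in># lam"] p_core_filter_mset[of p "\<lambda>x. x \<notin># lam"]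
      by (simp_all add: p_core_fibre_def P_def filter_mset_all)
    then show "split nu \<in> p_core_fibre p lam \<times> p_core_fibre p mu"
      using nu by (auto simp: split_def p_core_fibre_def is_partition_def)
  qed (auto split: prod.splits)
qed

lemma g_lam_add:
  assumes "prime p" "p_deprived p lam" "p_deprived p mu" "set_mset lam \<inter> set_mset mu = {}"
  shows "g_lam p (lam + mu) = sf_mult (g_lam p lam) (g_lam p mu)"
proof -
  have deprived: "p_deprived p (lam + mu)"
    using assms(2,3) unfolding p_deprived_def by auto
  have disjoint: "set_mset a \<inter> set_mset b = {}" if "a \<in> p_core_fibre p lam" "b \<in> p_core_fibre p mu" for a b
    using p_free_part_in_p_core_fibre[OF assms(1) that(1)] p_free_part_in_p_core_fibre[OF assms(1) that(2)]
      assms(4) by blast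
  have "sf_mult (g_lam p lam) (g_lam p mu)
      = (\<lambda>m. \<Sum>a\<in>p_core_fibre p lam. \<Sum>b\<in>p_core_fibre p mu.
               class_weight a * class_weight b * sf_mult (p_lam a) (p_lam b) m)"
    unfolding g_lam_eq_sum_p_core_fibre[OF assms(1,2)] g_lam_eq_sum_p_core_fibre[OF assms(1,3)]
      sf_mult_sum_sum sf_mult_scale ..
  also have "\<dots> = (\<lambda>m. \<Sum>(a, b)\<in>p_core_fibre p lam \<times> p_core_fibre p mu.
               class_weight (a + b) * p_lam (a + b) m)"
    unfolding sum.cartesian_product
    by (intro ext sum.cong refl) (auto simp: disjoint class_weight_add p_lam_add)
  also have "\<dots> = g_lam p (lam + mu)"
    unfolding g_lam_eq_sum_p_core_fibre[OF assms(1) deprived]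
    by (intro ext) (rule sum_p_core_fibre_add[OF assms(1,4)])
  finally show ?thesis ..
qed

lemma g_lam_empty: "g_lam p {#} = sf_one"
proof -
  have empty: "mu = {#}" if "is_partition mu" "sum_mset mu = 0" for mu
    using size_le_sum_mset[OF that(1)] that(2) by simp
  have "is_partition {#}"
    by (simp add: is_partition_def)
  then have "{mu. is_partition mu \<and> sum_mset mu = sum_mset {#} \<and> p_equiv p mu {#}} = {{#}}"
    by (auto simp: p_equiv_def dest: empty)
  then show ?thesis
    by (simp add: g_lam_def sign_lam_def z_lam_def p_lam_empty)
qed

lemma g_lam_eq_foldr:
  assumes "prime p" "p_deprived p nu" "distinct xs" "set xs = set_mset nu"
  shows "g_lam p nu = foldr (\<lambda>u. sf_mult (g_lam p (replicate_mset (count nu u) u))) xs sf_one"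
  using assms(2-)
proof (induction xs arbitrary: nu)
  case Nil
  then have "set_mset nu = {}"
    by simp
  then show ?case
    by (simp add: g_lam_empty)
next
  case (Cons x xs)
  define k where "k = count nu x"
  define nu' where "nu' = filter_mset (\<lambda>y. y \<noteq> x) nu"
  have nu: "replicate_mset k x + nu' = nu"
    unfolding k_def nu'_def by (metis filter_eq_replicate_mset multiset_partition)
  have deprived: "p_deprived p (replicate_mset k x)" "p_deprived p nu'"
    using Cons.prems(1,3) unfolding k_def nu'_def p_deprived_def by auto
  have disjoint: "set_mset (replicate_mset k x) \<inter> set_mset nu' = {}"
    unfolding nu'_def by auto
  have "g_lam p nu = sf_mult (g_lam p (replicate_mset k x)) (g_lam p nu')"
    using g_lam_add[OF assms(1) deprived disjoint] unfolding nu .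
  moreover have "g_lam p nu' = foldr (\<lambda>u. sf_mult (g_lam p (replicate_mset (count nu' u) u))) xs sf_one"
    using Cons.IH[OF deprived(2)] Cons.prems(2,3) unfolding nu'_def by auto
  moreover have "\<dots> = foldr (\<lambda>u. sf_mult (g_lam p (replicate_mset (count nu u) u))) xs sf_one"
    using Cons.prems(2) by (intro foldr_cong) (auto simp: nu'_def)
  ultimately show ?case by (simp add: k_def)
qed

theorem lemma5p1:
  fixes p :: nat and lam mu :: "nat multiset"
  assumes "prime p"
    and "is_partition lam" and "is_partition mu"
    and "p_deprived p lam" and "p_deprived p mu"
    and "set_mset lam \<inter> set_mset mu = {}"
  shows "g_lam p (lam + mu) = sf_mult (g_lam p lam) (g_lam p mu)
     \<and> (\<forall>nu. is_partition nu \<and> p_deprived p nu \<longrightarrow>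
           g_lam p nu = sf_prod (\<lambda>u. g_lam p (replicate_mset (count nu u) u)) (set_mset nu))"
proof (intro conjI allI impI)
  show "g_lam p (lam + mu) = sf_mult (g_lam p lam) (g_lam p mu)"
    using g_lam_add[OF assms(1,4,5,6)] .
  fix nu assume "is_partition nu \<and> p_deprived p nu"
  then show "g_lam p nu = sf_prod (\<lambda>u. g_lam p (replicate_mset (count nu u) u)) (set_mset nu)"
    unfolding sf_prod_def by (intro g_lam_eq_foldr[OF assms(1)]) auto
qed

end
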